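(* Let $c\ge1$ be an integer and let $\Delta_c:=\mathbb E\big[\frac{c}{\tilde k_{+c}};B^0_{N+1}\ge c\big]$. Then $$\Delta_c\le \mathbb P\big(B^1_{1:c}=N_1\big)\,\mathbb E\Big[\frac{c}{c+N_1+B^0_{1:N_1+c}}\,\Big|\,B^0_{N+1}\ge c\Big]+1-\mathbb P\big(B^1_{1:c}=N_1\big)$$ and $$\mathbb E\big[\tilde k_{+c}\,\big|\,B^0_{N+1}\ge c\big]\ge\frac{(N_1+c)\,\mathbb P\big(B^1_{1:c}=N_1\big)}{1-\mathbb E\Big[\frac{B^0_{1:N}}{N}\,\Big|\,B^0_{1:N}\le N_0-c\Big]}.$$
   Context: Setting: $N\ge 1$ tests indexed by $\mathcal N=\{1,\dots,N\}=\mathcal H_0\sqcup\mathcal H_1$ (null and alternative indices), $N_0=|\mathcal H_0|$, $N_1=|\mathcal H_1|$. The p-values $p=(p_i)_{i\in\mathcal N}$ are jointly independent, with $p_i\sim U(0,1)$ for $i\in\mathcal H_0$ and $p_i\sim\mathbb P^1_i$ (an arbitrary distribution on $[0,1]$) for $i\in\mathcal H_1$. Fix $q\in(0,1)$. Bins: $B_i=\{x:(i-1)q/N\le x<iq/N\}$ for $i=1,\dots,N$, and $B_{N+1}=[q,1]$. Loads: $B^0_i=|\{j\in\mathcal H_0:p_j\in B_i\}|$, $B^1_i=|\{j\in\mathcal H_1:p_j\in B_i\}|$, $B^{\mathcal N}_i=|\{j\in\mathcal N:p_j\in B_i\}|$; $B^{\ast}_{a:b}=\sum_{l=a}^bB^\ast_l$,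 $B^\ast_{1:0}=0$. Rejection count $\tilde k=\max\{i\in\{0,\dots,N\}:B^{\mathcal N}_{1:i}=i\}$; $\tilde k_{+c}=\max\{i\in\{c,\dots,N\}:B^{\mathcal N}_{1:i}=i-c\}$ if $B^0_{N+1}\ge c$, and $\tilde k_{+c}=\tilde k$ otherwise. $\mathbb E[X;A]=\mathbb E[X\mathbf 1_A]$. *)

theory Defs
  imports "HOL-Probability.Probability"
begin

definition bin :: "nat \<Rightarrow> real \<Rightarrow> nat \<Rightarrow> real set" where
  "bin N q i = (if i = N + 1 then {q..1}
                else {x. (real i - 1) * q / real N \<le> x \<and> x < real i * q / real N})"

definition load :: "nat \<Rightarrow> real \<Rightarrow> nat set \<Rightarrow> (nat \<Rightarrow> real) \<Rightarrow> nat \<Rightarrow> nat" where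
  "load N q S pv i = card {j \<in> S. pv j \<in> bin N q i}"

text \<open>B^S_{a:b} = sum of loads of bins a..b (empty sum = 0 if b < a).\<close>
definition loads :: "nat \<Rightarrow> real \<Rightarrow> nat set \<Rightarrow> (nat \<Rightarrow> real) \<Rightarrow> nat \<Rightarrow> nat \<Rightarrow> nat" where
  "loads N q S pv a b = (\<Sum>l=a..b. load N q S pv l)"

definition ktilde :: "nat \<Rightarrow> real \<Rightarrow> (nat \<Rightarrow> real) \<Rightarrow> nat" where
  "ktilde N q pv = Max {i \<in> {0..N}. loads N q {1..N} pv 1 i = i}"

definition ktilde_plus :: "nat \<Rightarrow> real \<Rightarrow> nat set \<Rightarrow> nat \<Rightarrow> (nat \<Rightarrow> real) \<Rightarrow> nat" where
  "ktilde_plus N q H0 c pv =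
     (if load N q H0 pv (N + 1) \<ge> c
      then Max {i \<in> {c..N}. int (loads N q {1..N} pv 1 i) = int i - int c}
      else ktilde N q pv)"

definition cond_expect :: "'a measure \<Rightarrow> ('a \<Rightarrow> real) \<Rightarrow> 'a set \<Rightarrow> real" where
  "cond_expect M X A = (\<integral>x. X x * indicator A x \<partial>M) / measure M A"

end

theory Submission
  imports Defs
begin

text \<open>
  Replace every p-value by the index of its bin, its label. Everything in the statement depends
  only on these labels; they are independent, and a null label is uniform on the bins \<open>1..N\<close>
  once it is known to lie among them. So all expectations become finite sums over label vectors
  with product weights.

  On \<open>E\<^sub>1\<close> the alternatives lie in bins \<open>1..c\<close>, hence on \<open>A \<inter> E\<^sub>1\<close> the count
  \<open>k\<^sub>+\<^sub>c\<close> is the last crossing \<open>G\<close> of \<open>i \<mapsto> B\<^sup>0\<^sub>1\<^sub>:\<^sub>i + N\<^sub>1 + c\<close> with the diagonal, and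
  \<open>G \<ge> N\<^sub>1 + c + B\<^sup>0\<^sub>1\<^sub>:\<^sub>N\<^sub>1\<^sub>+\<^sub>c\<close>. Since \<open>A\<close> and \<open>G\<close> depend only on the null labels and \<open>E\<^sub>1\<close>
  only on the alternative ones, this gives the first bound.

  For the second, \<open>B\<^sup>0\<^sub>1\<^sub>:\<^sub>i / i\<close> is a backward martingale in \<open>i\<close> and \<open>G\<close> a stopping time for
  it, so optional stopping yields \<open>E[(N\<^sub>1 + c)/G; A] = E[1 - B\<^sup>0\<^sub>1\<^sub>:\<^sub>N/N; A]\<close>. Combined with
  the Cauchy-Schwarz inequality \<open>P(A)\<^sup>2 \<le> E[G; A] E[1/G; A]\<close> and with
  \<open>E[k\<^sub>+\<^sub>c; A] \<ge> E[G; A \<inter> E\<^sub>1] = E[G; A] P(E\<^sub>1)\<close>, this gives the second bound, because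
  \<open>A\<close> and \<open>A'\<close> differ only by a null set.
\<close>

section \<open>Bin indices\<close>

text \<open>Values outside \<open>[0, 1]\<close> get the index 0.\<close>
definition bin_index :: "nat \<Rightarrow> real \<Rightarrow> real \<Rightarrow> nat" where
  "bin_index N q x =
     (if \<exists>l\<in>{1..N+1}. x \<in> bin N q l then THE l. l \<in> {1..N+1} \<and> x \<in> bin N q l else 0)"

lemma bins_disjoint:
  assumes "0 \<le> q" "l \<in> {1..N+1}" "l' \<in> {1..N+1}" "x \<in> bin N q l" "x \<in> bin N q l'"
  shows "l = l'"
proof -
  have no_overlap: False if "a < b" "b \<le> N + 1" "x \<in> bin N q a" "x \<in> bin N q b" for a b
  proof -
    have "a \<le> N" using that(1,2) by simp
    then have "x < real a * q / real N" using that(3) by (auto simp: bin_def)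
    moreover have "real a * q / real N \<le> (if b = N + 1 then q else (real b - 1) * q / real N)"
    proof (cases "b = N + 1")
      case True
      have "real a * q \<le> real N * q" using \<open>a \<le> N\<close> assms(1) by (intro mult_right_mono) auto
      then show ?thesis
        using True assms(1) by (cases "N = 0") (auto simp: divide_le_eq mult.commute)
    next
      case False
      then show ?thesis using that(1) assms(1) by (auto intro!: divide_right_mono mult_right_mono)
    qed
    ultimately show False using that(2,4) by (auto simp: bin_def split: if_splits)
  qed
  show ?thesis
  proof (rule ccontr)
    assume "l \<noteq> l'"
    then consider "l < l'" | "l' < l" by linarith
    then show False
      by cases (use no_overlap[of l l'] no_overlap[of l' l] assms(2-5) in auto)
  qed
qed

lemma bin_index_eq_iff:
  assumes "0 \<le> q" "l \<in> {1..N+1}"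
  shows "bin_index N q x = l \<longleftrightarrow> x \<in> bin N q l"
proof -
  have "(THE l. l \<in> {1..N+1} \<and> x \<in> bin N q l) = k" if "k \<in> {1..N+1}" "x \<in> bin N q k" for k
    using bins_disjoint[OF assms(1)] that by (intro the_equality) auto
  then show ?thesis using assms(2) unfolding bin_index_def by auto
qed

lemma bin_index_eq_0_iff:
  assumes "0 \<le> q"
  shows "bin_index N q x = 0 \<longleftrightarrow> (\<forall>l\<in>{1..N+1}. x \<notin> bin N q l)"
proof
  show "\<forall>l\<in>{1..N+1}. x \<notin> bin N q l" if "bin_index N q x = 0"
  proof (intro ballI notI)
    fix l assume "l \<in> {1..N+1}" "x \<in> bin N q l"
    then have "bin_index N q x = l" using bin_index_eq_iff[OF assms] by blast
    then show False using that \<open>l \<in> {1..N+1}\<close> by simp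
  qed
qed (auto simp: bin_index_def)

lemma bin_index_le:
  assumes "0 \<le> q"
  shows "bin_index N q x \<le> N + 1"
proof (cases "bin_index N q x = 0")
  case False
  then obtain l where "l \<in> {1..N+1}" "x \<in> bin N q l" using bin_index_eq_0_iff[OF assms] by auto
  then have "bin_index N q x = l" using bin_index_eq_iff[OF assms] by blast
  then show ?thesis using \<open>l \<in> {1..N+1}\<close> by simp
qed simp

lemma sets_bin: "bin N q l \<in> sets borel"
  unfolding bin_def by (auto simp: borel_closed)

lemma measurable_bin_index:
  assumes "0 \<le> q"
  shows "bin_index N q \<in> borel \<rightarrow>\<^sub>M count_space UNIV"
proof (subst measurable_count_space_eq2_countable, safe)
  fix l :: nat
  have "bin_index N q -` {l} =
      (if l \<in> {1..N+1} then bin N q l else if l = 0 then - (\<Union>k\<in>{1..N+1}. bin N q k) else {})"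
  proof (cases "l \<in> {1..N+1}")
    case False
    have "bin_index N q x \<noteq> l" if "l \<noteq> 0" for x
      using bin_index_le[OF assms, of N x] False that by auto
    then show ?thesis using False bin_index_eq_0_iff[OF assms, of N] by auto
  qed (use bin_index_eq_iff[OF assms] in auto)
  then show "bin_index N q -` {l} \<inter> space borel \<in> sets borel"
    using sets_bin by auto
qed simp

section \<open>Counting labels\<close>

definition label_count :: "nat set \<Rightarrow> (nat \<Rightarrow> nat) \<Rightarrow> nat \<Rightarrow> nat" where
  "label_count S v l = card {j\<in>S. v j = l}"

definition cum_count :: "nat set \<Rightarrow> (nat \<Rightarrow> nat) \<Rightarrow> nat \<Rightarrow> nat" where
  "cum_count S v b = (\<Sum>l=1..b. label_count S v l)"

lemma cum_count_eq_card:
  assumes "finite S"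
  shows "cum_count S v b = card {j\<in>S. 1 \<le> v j \<and> v j \<le> b}"
proof (induction b)
  case (Suc b)
  have "{j\<in>S. 1 \<le> v j \<and> v j \<le> Suc b} = {j\<in>S. 1 \<le> v j \<and> v j \<le> b} \<union> {j\<in>S. v j = Suc b}"
    by auto
  moreover have "card \<dots> = card {j\<in>S. 1 \<le> v j \<and> v j \<le> b} + card {j\<in>S. v j = Suc b}"
    using assms by (intro card_Un_disjoint) auto
  ultimately show ?case using Suc by (simp add: cum_count_def label_count_def)
next
  case 0
  show ?case by (auto simp: cum_count_def card_eq_0_iff)
qed

lemma cum_count_eq_sum:
  "finite S \<Longrightarrow> real (cum_count S v b) = (\<Sum>j\<in>S. if 1 \<le> v j \<and> v j \<le> b then 1 else 0)"
  by (simp add: cum_count_eq_card sum.If_cases Int_def)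

lemma cum_count_mono: "finite S \<Longrightarrow> b \<le> b' \<Longrightarrow> cum_count S v b \<le> cum_count S v b'"
  by (auto simp: cum_count_eq_card intro!: card_mono)

lemma cum_count_le_card: "finite S \<Longrightarrow> cum_count S v b \<le> card S"
  by (simp add: cum_count_eq_card card_mono)

lemma cum_count_Suc: "cum_count S v (Suc b) = cum_count S v b + label_count S v (Suc b)"
  by (simp add: cum_count_def)

lemma cum_count_add_label_count_le_card:
  "finite S \<Longrightarrow> cum_count S v b + label_count S v (Suc b) \<le> card S"
  using cum_count_le_card[of S v "Suc b"] by (simp add: cum_count_Suc)

lemma cum_count_add_label_count_eq_card:
  assumes "finite S" "\<And>j. j \<in> S \<Longrightarrow> 1 \<le> v j \<and> v j \<le> Suc b"
  shows "cum_count S v b + label_count S v (Suc b) = card S"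
proof -
  have "{j\<in>S. 1 \<le> v j \<and> v j \<le> Suc b} = S" using assms(2) by auto
  then have "cum_count S v (Suc b) = card S" using assms(1) by (simp add: cum_count_eq_card)
  then show ?thesis by (simp add: cum_count_Suc)
qed

lemma cum_count_Un:
  assumes "finite S" "finite T" "S \<inter> T = {}"
  shows "cum_count (S \<union> T) v b = cum_count S v b + cum_count T v b"
proof -
  have "{j\<in>S \<union> T. 1 \<le> v j \<and> v j \<le> b} = {j\<in>S. 1 \<le> v j \<and> v j \<le> b} \<union> {j\<in>T. 1 \<le> v j \<and> v j \<le> b}"
    by auto
  then show ?thesis using assms by (simp add: cum_count_eq_card card_Un_disjoint disjoint_iff)
qed

lemma label_count_cong: "(\<And>j. j \<in> S \<Longrightarrow> v j = v' j) \<Longrightarrow> label_count S v l = label_count S v' l"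
  unfolding label_count_def by (intro arg_cong[where f=card]) auto

lemma cum_count_cong: "(\<And>j. j \<in> S \<Longrightarrow> v j = v' j) \<Longrightarrow> cum_count S v b = cum_count S v' b"
  unfolding cum_count_def using label_count_cong by (metis (no_types, lifting) sum.cong)

lemma discrete_ivt:
  fixes g :: "nat \<Rightarrow> int"
  assumes "a \<le> b" "g a \<ge> 0" "g b \<le> 0" "\<And>i. g (Suc i) \<ge> g i - 1"
  shows "\<exists>i\<in>{a..b}. g i = 0 \<and> int i \<ge> int a + g a"
  using assms(1,2)
proof (induction "b - a" arbitrary: a)
  case 0
  then show ?case using assms(3) by auto
next
  case (Suc d)
  show ?case
  proof (cases "g a = 0")
    case False
    then have "g (Suc a) \<ge> 0" using assms(4)[of a] Suc.prems by linarith
    moreover have "d = b - Suc a" "Suc a \<le> b" using Suc.hyps by auto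
    ultimately obtain i where "i\<in>{Suc a..b}" "g i = 0" "int i \<ge> int (Suc a) + g (Suc a)"
      using Suc.hyps(1) by blast
    then show ?thesis using assms(4)[of a] by (intro bexI[of _ i]) auto
  qed (use Suc.prems in auto)
qed

lemma load_eq_label_count:
  assumes "0 \<le> q" "l \<in> {1..N+1}"
  shows "load N q S pv l = label_count S (\<lambda>j. bin_index N q (pv j)) l"
  unfolding load_def label_count_def using bin_index_eq_iff[OF assms] by simp

lemma loads_eq_cum_count:
  assumes "0 \<le> q" "b \<le> N + 1"
  shows "loads N q S pv 1 b = cum_count S (\<lambda>j. bin_index N q (pv j)) b"
  unfolding loads_def cum_count_def using load_eq_label_count[OF assms(1)] assms(2)
  by (intro sum.cong) auto

lemma ktilde_plus_eq_Max:
  assumes "0 \<le> q" "c \<le> label_count H0 (\<lambda>j. bin_index N q (pv j)) (N+1)"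
  shows "ktilde_plus N q H0 c pv =
    Max {i\<in>{c..N}. int (cum_count {1..N} (\<lambda>j. bin_index N q (pv j)) i) = int i - int c}"
proof -
  have "{i\<in>{c..N}. int (loads N q {1..N} pv 1 i) = int i - int c} =
      {i\<in>{c..N}. int (cum_count {1..N} (\<lambda>j. bin_index N q (pv j)) i) = int i - int c}"
    using loads_eq_cum_count[OF assms(1)] by auto
  then show ?thesis
    using assms load_eq_label_count[OF assms(1), of "N+1"] unfolding ktilde_plus_def by simp
qed

abbreviation label_vectors :: "nat \<Rightarrow> (nat \<Rightarrow> nat) set" where
  "label_vectors N \<equiv> PiE {1..N} (\<lambda>_. {0..N+1})"

lemma finite_label_vectors: "finite (label_vectors N)"
  by (simp add: finite_PiE)

lemma sum_PiE_fun_upd: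
  assumes "finite I" "u \<in> I"
  shows "(\<Sum>v\<in>PiE I B. h v) = (\<Sum>a\<in>B u. \<Sum>y\<in>PiE (I - {u}) B. h (y(u := a)))"
proof -
  have "PiE I B = (\<lambda>(a, y). y(u := a)) ` (B u \<times> PiE (I - {u}) B)"
    using PiE_insert_eq[of u "I - {u}" B] assms(2) by (simp add: insert_absorb)
  moreover have "inj_on (\<lambda>(a, y). y(u := a)) (B u \<times> PiE (I - {u}) B)"
  proof (rule inj_onI, clarify)
    fix a y a' y' assume eq: "y(u := a) = y'(u := a')"
      and "y \<in> PiE (I - {u}) B" "y' \<in> PiE (I - {u}) B"
    then have "y u = y' u" by (auto simp: PiE_def extensional_def)
    then show "a = a' \<and> y = y'" using eq by (metis fun_upd_same fun_upd_triv fun_upd_upd)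
  qed
  ultimately show ?thesis
    by (simp add: sum.reindex sum.cartesian_product case_prod_unfold)
qed

lemma sum_PiE_Un:
  assumes "S \<inter> T = {}"
  shows "(\<Sum>v\<in>PiE (S \<union> T) B. h v) = (\<Sum>x\<in>PiE S B. \<Sum>y\<in>PiE T B. h (override_on y x S))"
proof -
  have "(\<Sum>v\<in>PiE (S \<union> T) B. h v) = (\<Sum>(x, y)\<in>PiE S B \<times> PiE T B. h (override_on y x S))"
    by (rule sum.reindex_bij_witness[of _ "\<lambda>(x, y). override_on y x S"
          "\<lambda>v. (restrict v S, restrict v T)"])
       (use assms in \<open>auto simp: override_on_def fun_eq_iff PiE_def extensional_def Pi_def
                intro!: arg_cong[where f=h]\<close>)
  then show ?thesis by (simp add: sum.cartesian_product)
qed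

definition depends_only_on :: "nat set \<Rightarrow> ((nat \<Rightarrow> nat) \<Rightarrow> 'b) \<Rightarrow> bool" where
  "depends_only_on S f \<longleftrightarrow> (\<forall>v v'. (\<forall>j\<in>S. v j = v' j) \<longrightarrow> f v = f v')"

lemma depends_only_onD:
  "depends_only_on S f \<Longrightarrow> (\<And>j. j \<in> S \<Longrightarrow> v j = v' j) \<Longrightarrow> f v = f v'"
  unfolding depends_only_on_def by blast

lemma depends_only_on_const: "depends_only_on S (\<lambda>_. a)"
  unfolding depends_only_on_def by simp

lemma depends_only_on_comp: "depends_only_on S f \<Longrightarrow> depends_only_on S (\<lambda>v. h (f v))"
  unfolding depends_only_on_def by metis

lemma depends_only_on_If:
  "depends_only_on S P \<Longrightarrow> depends_only_on S f \<Longrightarrow> depends_only_on S g \<Longrightarrow>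
    depends_only_on S (\<lambda>v. if P v then f v else g v)"
  unfolding depends_only_on_def by metis

lemma sum_telescope_from:
  fixes F :: "nat \<Rightarrow> 'a::ab_group_add"
  assumes "1 \<le> g" "g \<le> N"
  shows "(\<Sum>i\<in>{2..N}. if g < i then F (i - 1) - F i else 0) = F g - F N"
proof -
  have "(\<Sum>i\<in>{2..N}. if g < i then F (i - 1) - F i else 0) = (\<Sum>i\<in>{Suc g..N}. F (i - 1) - F i)"
    using assms by (intro sum.mono_neutral_cong_right) auto
  also have "\<dots> = F g - F N"
    by (rule dec_induct[OF assms(2)]) (simp_all add: algebra_simps)
  finally show ?thesis .
qed

lemma Cauchy_Schwarz_weighted:
  fixes w x :: "'b \<Rightarrow> real"
  assumes "finite S" "\<And>s. s \<in> S \<Longrightarrow> w s \<ge> 0" "\<And>s. s \<in> S \<Longrightarrow> w s \<noteq> 0 \<Longrightarrow> x s > 0"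
  shows "(\<Sum>s\<in>S. w s)\<^sup>2 \<le> (\<Sum>s\<in>S. w s * x s) * (\<Sum>s\<in>S. w s / x s)"
proof -
  define f where "f s = sqrt (w s * x s)" for s
  define g where "g s = sqrt (w s / x s)" for s
  have "f s * g s = w s \<and> (f s)\<^sup>2 = w s * x s \<and> (g s)\<^sup>2 = w s / x s" if "s \<in> S" for s
  proof (cases "w s = 0")
    case False
    then have "x s > 0" "w s \<ge> 0" using assms that by auto
    moreover have "f s * g s = sqrt ((w s)\<^sup>2)"
      using \<open>x s > 0\<close> unfolding f_def g_def by (simp add: power2_eq_square flip: real_sqrt_mult)
    ultimately show ?thesis unfolding f_def g_def by simp
  qed (simp add: f_def g_def)
  then have "(\<Sum>s\<in>S. w s)\<^sup>2 = (\<Sum>s\<in>S. f s * g s)\<^sup>2"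
    and "(\<Sum>s\<in>S. (f s)\<^sup>2) * (\<Sum>s\<in>S. (g s)\<^sup>2) = (\<Sum>s\<in>S. w s * x s) * (\<Sum>s\<in>S. w s / x s)"
    by simp_all
  then show ?thesis using Cauchy_Schwarz_ineq_sum[of f g S] by simp
qed

section \<open>Independent labels with uniform null labels\<close>

text \<open>\<open>pr j l\<close> is the probability that the p-value \<open>j\<close> falls into bin \<open>l\<close> (\<open>l = 0\<close>: outside
  \<open>[0, 1]\<close>), and a label vector \<open>v\<close> has probability \<open>weight v\<close>.\<close>
locale label_weights =
  fixes N c :: nat and H0 H1 :: "nat set" and pr :: "nat \<Rightarrow> nat \<Rightarrow> real"
  assumes H0_Un_H1: "H0 \<union> H1 = {1..N}" and H0_Int_H1: "H0 \<inter> H1 = {}"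
    and c_pos: "1 \<le> c" and c_le_card_H0: "c \<le> card H0"
    and pr_nonneg: "\<And>j l. pr j l \<ge> 0"
    and sum_pr: "\<And>j. j \<in> {1..N} \<Longrightarrow> (\<Sum>l\<in>{0..N+1}. pr j l) = 1"
    and pr_null_uniform: "\<And>j l. j \<in> H0 \<Longrightarrow> l \<in> {1..N} \<Longrightarrow> pr j l = pr j 1"
    and pr_null_top_pos: "\<And>j. j \<in> H0 \<Longrightarrow> pr j (N+1) > 0"
    and pr_null_zero: "\<And>j. j \<in> H0 \<Longrightarrow> pr j 0 = 0"
begin

definition weight_on :: "nat set \<Rightarrow> (nat \<Rightarrow> nat) \<Rightarrow> real" where
  "weight_on S v = (\<Prod>j\<in>S. pr j (v j))"

abbreviation weight :: "(nat \<Rightarrow> nat) \<Rightarrow> real" where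
  "weight \<equiv> weight_on {1..N}"

lemma finite_H0: "finite H0" and finite_H1: "finite H1"
  using H0_Un_H1 finite_subset[of H0 "{1..N}"] finite_subset[of H1 "{1..N}"] by auto

lemma card_H0_add_card_H1: "card H0 + card H1 = N"
  using card_Un_disjoint[OF finite_H0 finite_H1 H0_Int_H1] H0_Un_H1 by simp

lemma weight_on_nonneg: "weight_on S v \<ge> 0"
  unfolding weight_on_def by (intro prod_nonneg pr_nonneg)

lemma sum_weight_on:
  assumes "S \<subseteq> {1..N}"
  shows "(\<Sum>v\<in>PiE S (\<lambda>_. {0..N+1}). weight_on S v) = 1"
proof -
  have "finite S" using assms finite_subset by blast
  then have "(\<Sum>v\<in>PiE S (\<lambda>_. {0..N+1}). weight_on S v) = (\<Prod>j\<in>S. \<Sum>l\<in>{0..N+1}. pr j l)"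
    unfolding weight_on_def by (subst prod_sum_PiE) auto
  also have "\<dots> = 1" using assms sum_pr by (intro prod.neutral) auto
  finally show ?thesis .
qed

lemma weight_fun_upd:
  assumes "u \<in> {1..N}"
  shows "weight (y(u := a)) = pr u a * weight_on ({1..N} - {u}) y"
proof -
  have "weight (y(u := a)) = pr u a * weight_on ({1..N} - {u}) (y(u := a))"
    unfolding weight_on_def using assms by (subst prod.remove) auto
  also have "weight_on ({1..N} - {u}) (y(u := a)) = weight_on ({1..N} - {u}) y"
    unfolding weight_on_def by (intro prod.cong) auto
  finally show ?thesis .
qed

lemma sum_weight_split:
  "(\<Sum>v\<in>label_vectors N. weight v * h v) =
    (\<Sum>x\<in>PiE H0 (\<lambda>_. {0..N+1}). \<Sum>y\<in>PiE H1 (\<lambda>_. {0..N+1}).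
       weight_on H0 x * weight_on H1 y * h (override_on y x H0))"
proof -
  have "weight (override_on y x H0) = weight_on H0 x * weight_on H1 y" for x y
  proof -
    have "weight (override_on y x H0) =
        weight_on H0 (override_on y x H0) * weight_on H1 (override_on y x H0)"
      unfolding weight_on_def H0_Un_H1[symmetric]
      using finite_H0 finite_H1 H0_Int_H1 by (rule prod.union_disjoint)
    also have "\<dots> = weight_on H0 x * weight_on H1 y"
      unfolding weight_on_def using H0_Int_H1
      by (auto simp: override_on_def intro!: arg_cong2[where f=times] prod.cong)
    finally show ?thesis .
  qed
  then show ?thesis
    unfolding H0_Un_H1[symmetric] by (simp add: sum_PiE_Un[OF H0_Int_H1])
qed

lemma sum_weight_mult:
  assumes f: "depends_only_on H0 f" and g: "depends_only_on H1 g"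
  shows "(\<Sum>v\<in>label_vectors N. weight v * (f v * g v)) =
    (\<Sum>v\<in>label_vectors N. weight v * f v) * (\<Sum>v\<in>label_vectors N. weight v * g v)"
proof -
  have f_eq: "f (override_on y x H0) = f x" for x y
    by (rule depends_only_onD[OF f]) simp
  have g_eq: "g (override_on y x H0) = g y" for x y
    by (rule depends_only_onD[OF g]) (use H0_Int_H1 in \<open>auto simp: override_on_def\<close>)
  have sum0: "(\<Sum>x\<in>PiE H0 (\<lambda>_. {0..N+1}). weight_on H0 x) = 1"
    and sum1: "(\<Sum>y\<in>PiE H1 (\<lambda>_. {0..N+1}). weight_on H1 y) = 1"
    using sum_weight_on H0_Un_H1 by auto
  have "(\<Sum>v\<in>label_vectors N. weight v * (f v * g v)) =
      (\<Sum>x\<in>PiE H0 (\<lambda>_. {0..N+1}). weight_on H0 x * f x) *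
      (\<Sum>y\<in>PiE H1 (\<lambda>_. {0..N+1}). weight_on H1 y * g y)"
    by (subst sum_weight_split) (simp add: f_eq g_eq sum_product mult_ac)
  moreover have "(\<Sum>v\<in>label_vectors N. weight v * f v) =
      (\<Sum>x\<in>PiE H0 (\<lambda>_. {0..N+1}). \<Sum>y\<in>PiE H1 (\<lambda>_. {0..N+1}). (weight_on H0 x * f x) * weight_on H1 y)"
    by (subst sum_weight_split) (simp add: f_eq mult_ac)
  moreover have "(\<Sum>v\<in>label_vectors N. weight v * g v) =
      (\<Sum>x\<in>PiE H0 (\<lambda>_. {0..N+1}). \<Sum>y\<in>PiE H1 (\<lambda>_. {0..N+1}). weight_on H0 x * (weight_on H1 y * g y))"
    by (subst sum_weight_split) (simp add: g_eq mult_ac)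
  ultimately show ?thesis
    by (simp only: sum_product[symmetric] sum0 sum1 mult_1_left mult_1_right)
qed

lemma N_pos: "1 \<le> N"
  using c_pos c_le_card_H0 card_H0_add_card_H1 by simp

subsection \<open>The last crossing\<close>

definition shift :: nat where
  "shift = card H1 + c"

definition event_A :: "(nat \<Rightarrow> nat) \<Rightarrow> bool" where
  "event_A v \<longleftrightarrow> c \<le> label_count H0 v (N+1)"

definition event_E1 :: "(nat \<Rightarrow> nat) \<Rightarrow> bool" where
  "event_E1 v \<longleftrightarrow> cum_count H1 v c = card H1"

definition null_crossings :: "(nat \<Rightarrow> nat) \<Rightarrow> nat set" where
  "null_crossings v = {i\<in>{c..N}. cum_count H0 v i + shift = i}"

text \<open>This is the \<open>G\<close> of the proof idea.\<close>
definition last_null_crossing :: "(nat \<Rightarrow> nat) \<Rightarrow> nat" where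
  "last_null_crossing v = Max (null_crossings v)"

definition kplus :: "(nat \<Rightarrow> nat) \<Rightarrow> nat" where
  "kplus v = Max {i\<in>{c..N}. int (cum_count {1..N} v i) = int i - int c}"

lemma shift_le_N: "shift \<le> N" and c_le_shift: "c \<le> shift"
  using card_H0_add_card_H1 c_le_card_H0 unfolding shift_def by auto

lemma finite_null_crossings [simp]: "finite (null_crossings v)"
  by (simp add: null_crossings_def)

lemma null_crossing_exists:
  assumes "event_A v"
  shows "\<exists>i\<in>null_crossings v. shift + cum_count H0 v shift \<le> i"
proof -
  define g where "g i = int (cum_count H0 v i) + int shift - int i" for i
  have "g shift \<ge> 0" unfolding g_def by simp
  moreover have "g N \<le> 0"
    using cum_count_add_label_count_le_card[OF finite_H0, of v N] assms card_H0_add_card_H1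
    unfolding g_def event_A_def shift_def by simp
  moreover have "g (Suc i) \<ge> g i - 1" for i
    using cum_count_mono[OF finite_H0, of i "Suc i" v] unfolding g_def by simp
  ultimately obtain i where "i \<in> {shift..N}" "g i = 0" "int shift + g shift \<le> int i"
    using discrete_ivt[of shift N g] shift_le_N by blast
  then show ?thesis
    using c_le_shift unfolding null_crossings_def g_def by (intro bexI[of _ i]) auto
qed

lemma last_null_crossing_mem:
  assumes "event_A v"
  shows "last_null_crossing v \<in> null_crossings v"
  using null_crossing_exists[OF assms] unfolding last_null_crossing_def by (intro Max_in) auto

lemma last_null_crossing_bounds:
  assumes "event_A v"
  shows "c \<le> last_null_crossing v" "last_null_crossing v \<le> N"
    and "cum_count H0 v (last_null_crossing v) + shift = last_null_crossing v"
  using last_null_crossing_mem[OF assms] unfolding null_crossings_def by auto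

lemma last_null_crossing_ge:
  assumes "event_A v"
  shows "shift + cum_count H0 v shift \<le> last_null_crossing v"
proof -
  obtain i where "i \<in> null_crossings v" "shift + cum_count H0 v shift \<le> i"
    using null_crossing_exists[OF assms] by blast
  moreover have "i \<le> last_null_crossing v"
    unfolding last_null_crossing_def using calculation(1) by (rule Max_ge[OF finite_null_crossings])
  ultimately show ?thesis by linarith
qed

lemma last_null_crossing_less_iff:
  assumes "event_A v"
  shows "last_null_crossing v < i \<longleftrightarrow> (\<forall>k\<in>{i..N}. c \<le> k \<longrightarrow> cum_count H0 v k + shift \<noteq> k)"
proof -
  have "last_null_crossing v < i \<longleftrightarrow> (\<forall>k\<in>null_crossings v. k < i)"
    unfolding last_null_crossing_def using last_null_crossing_mem[OF assms]
    by (subst Max_less_iff) (auto simp: last_null_crossing_def)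
  also have "\<dots> \<longleftrightarrow> (\<forall>k\<in>{i..N}. c \<le> k \<longrightarrow> cum_count H0 v k + shift \<noteq> k)"
    unfolding null_crossings_def by (auto simp: not_less)
  finally show ?thesis .
qed

lemma kplus_ge_c:
  assumes "event_A v"
  shows "c \<le> kplus v"
proof -
  define g where "g i = int (cum_count {1..N} v i) + int c - int i" for i
  have "label_count H0 v (Suc N) \<le> label_count {1..N} v (Suc N)"
    unfolding label_count_def using H0_Un_H1 by (intro card_mono) auto
  then have "g N \<le> 0"
    using cum_count_add_label_count_le_card[of "{1..N}" v N] assms
    unfolding g_def event_A_def by simp
  moreover have "g c \<ge> 0" unfolding g_def by simp
  moreover have "g (Suc i) \<ge> g i - 1" for i
    using cum_count_mono[of "{1..N}" i "Suc i" v] unfolding g_def by simp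
  moreover have "c \<le> N" using c_le_card_H0 card_H0_add_card_H1 by simp
  ultimately obtain i where "i \<in> {c..N}" "g i = 0" using discrete_ivt[of c N g] by blast
  then have "kplus v \<in> {i\<in>{c..N}. int (cum_count {1..N} v i) = int i - int c}"
    unfolding kplus_def g_def by (intro Max_in) auto
  then show ?thesis by simp
qed

text \<open>On \<open>event_E1\<close> the alternatives fill bins \<open>1..c\<close>, so \<open>B\<^sub>1\<^sub>:\<^sub>i = B\<^sup>0\<^sub>1\<^sub>:\<^sub>i + N\<^sub>1\<close> for \<open>i \<ge> c\<close>.\<close>
lemma kplus_eq_last_null_crossing:
  assumes "event_A v" "event_E1 v"
  shows "kplus v = last_null_crossing v"
proof -
  have "cum_count H1 v i = card H1" if "c \<le> i" for i
    using cum_count_mono[OF finite_H1 that, of v] cum_count_le_card[OF finite_H1, of v i] assms(2)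
    unfolding event_E1_def by simp
  moreover have "cum_count {1..N} v i = cum_count H0 v i + cum_count H1 v i" for i
    using cum_count_Un[OF finite_H0 finite_H1 H0_Int_H1] H0_Un_H1 by metis
  ultimately have "i \<in> {i\<in>{c..N}. int (cum_count {1..N} v i) = int i - int c} \<longleftrightarrow>
      i \<in> null_crossings v" for i
    unfolding null_crossings_def shift_def by (cases "c \<le> i") auto
  then have "{i\<in>{c..N}. int (cum_count {1..N} v i) = int i - int c} = null_crossings v"
    by blast
  then show ?thesis unfolding kplus_def last_null_crossing_def by simp
qed

lemma depends_only_on_event_A: "depends_only_on H0 event_A"
  unfolding depends_only_on_def event_A_def using label_count_cong by metis

lemma depends_only_on_event_E1: "depends_only_on H1 event_E1"
  unfolding depends_only_on_def event_E1_def using cum_count_cong by metis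

lemma depends_only_on_cum_count: "depends_only_on H0 (\<lambda>v. cum_count H0 v b)"
  unfolding depends_only_on_def using cum_count_cong by metis

lemma depends_only_on_last_null_crossing: "depends_only_on H0 last_null_crossing"
proof (unfold depends_only_on_def, intro allI impI)
  fix v v' :: "nat \<Rightarrow> nat"
  assume "\<forall>j\<in>H0. v j = v' j"
  then have "null_crossings v = null_crossings v'"
    unfolding null_crossings_def using cum_count_cong[of H0 v v'] by simp
  then show "last_null_crossing v = last_null_crossing v'"
    unfolding last_null_crossing_def by simp
qed

subsection \<open>Optional stopping\<close>

definition stopped_before :: "nat \<Rightarrow> (nat \<Rightarrow> nat) \<Rightarrow> bool" where
  "stopped_before i v \<longleftrightarrow> event_A v \<and> last_null_crossing v < i"

definition null_frac_increment :: "nat \<Rightarrow> nat \<Rightarrow> real" where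
  "null_frac_increment i a =
     (if 1 \<le> a \<and> a \<le> i - 1 then 1 else 0) / real (i - 1)
     - (if 1 \<le> a \<and> a \<le> i then 1 else 0) / real i"

lemma null_frac_diff_eq_sum:
  "real (cum_count H0 v (i - 1)) / real (i - 1) - real (cum_count H0 v i) / real i =
    (\<Sum>u\<in>H0. null_frac_increment i (v u))"
  unfolding null_frac_increment_def
  by (simp add: cum_count_eq_sum[OF finite_H0] sum_subtractf sum_divide_distrib)

lemma sum_pr_null_upto:
  assumes "u \<in> H0" "m \<le> N"
  shows "(\<Sum>a\<in>{0..N+1}. pr u a * (if 1 \<le> a \<and> a \<le> m then 1 else 0)) = real m * pr u 1"
proof -
  have "(\<Sum>a\<in>{0..N+1}. pr u a * (if 1 \<le> a \<and> a \<le> m then 1 else 0)) = (\<Sum>a\<in>{1..m}. pr u a)"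
    using assms(2) by (intro sum.mono_neutral_cong_right) auto
  also have "\<dots> = (\<Sum>a\<in>{1..m}. pr u 1)"
    using assms by (intro sum.cong refl pr_null_uniform) auto
  finally show ?thesis by simp
qed

lemma sum_pr_null_frac_increment:
  assumes "u \<in> H0" "2 \<le> i" "i \<le> N"
  shows "(\<Sum>a\<in>{0..N+1}. pr u a * null_frac_increment i a) = 0"
proof -
  have "(\<Sum>a\<in>{0..N+1}. pr u a * null_frac_increment i a) =
      (\<Sum>a\<in>{0..N+1}. pr u a * (if 1 \<le> a \<and> a \<le> i - 1 then 1 else 0)) / real (i - 1) -
      (\<Sum>a\<in>{0..N+1}. pr u a * (if 1 \<le> a \<and> a \<le> i then 1 else 0)) / real i"
    unfolding null_frac_increment_def
    by (simp only: right_diff_distrib times_divide_eq_right sum_subtractf sum_divide_distrib)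
  also have "\<dots> = real (i - 1) * pr u 1 / real (i - 1) - real i * pr u 1 / real i"
    using assms by (simp only: sum_pr_null_upto)
  also have "\<dots> = 0" using assms by simp
  finally show ?thesis .
qed

lemma stopped_before_fun_upd:
  assumes "u \<in> H0" "i \<le> N" "a \<in> {1..i}" "b \<in> {1..i}"
  shows "stopped_before i (y(u := a)) = stopped_before i (y(u := b))"
proof -
  have "label_count H0 (y(u := a)) (N+1) = label_count H0 (y(u := b)) (N+1)"
    unfolding label_count_def using assms by (intro arg_cong[where f=card]) auto
  then have A: "event_A (y(u := a)) = event_A (y(u := b))"
    unfolding event_A_def by simp
  have "cum_count H0 (y(u := a)) k = cum_count H0 (y(u := b)) k" if "i \<le> k" for k
    unfolding cum_count_eq_card[OF finite_H0] using assms that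
    by (intro arg_cong[where f=card]) auto
  then show ?thesis
    unfolding stopped_before_def using A by (auto simp: last_null_crossing_less_iff)
qed

text \<open>Moving a null label within bins \<open>1..i\<close> does not affect \<open>stopped_before i\<close>, while the
  conditional law of the label on these bins is uniform, under which the increment has mean 0.\<close>
lemma sum_weight_stopped_increment:
  assumes "u \<in> H0" "2 \<le> i" "i \<le> N"
  shows "(\<Sum>v\<in>label_vectors N.
      weight v * (if stopped_before i v then null_frac_increment i (v u) else 0)) = 0"
proof -
  have u: "u \<in> {1..N}" using assms(1) H0_Un_H1 by auto
  define C where
    "C y = weight_on ({1..N} - {u}) y * (if stopped_before i (y(u := 1)) then 1 else 0)" for y
  have split: "weight (y(u := a)) *
      (if stopped_before i (y(u := a)) then null_frac_increment i ((y(u := a)) u) else 0) =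
      pr u a * null_frac_increment i a * C y" for y a
  proof (cases "a \<in> {1..i}")
    case True
    then have "stopped_before i (y(u := a)) = stopped_before i (y(u := 1))"
      using stopped_before_fun_upd[OF assms(1,3) True, of 1] assms by auto
    then show ?thesis unfolding C_def weight_fun_upd[OF u] by simp
  next
    case False
    then have "null_frac_increment i a = 0" unfolding null_frac_increment_def by auto
    then show ?thesis unfolding C_def weight_fun_upd[OF u] by simp
  qed
  have "(\<Sum>v\<in>label_vectors N.
      weight v * (if stopped_before i v then null_frac_increment i (v u) else 0)) =
      (\<Sum>a\<in>{0..N+1}. \<Sum>y\<in>PiE ({1..N} - {u}) (\<lambda>_. {0..N+1}). pr u a * null_frac_increment i a * C y)"
    by (simp only: sum_PiE_fun_upd[OF _ u] finite_atLeastAtMost split)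
  also have "\<dots> = (\<Sum>a\<in>{0..N+1}. pr u a * null_frac_increment i a) *
      (\<Sum>y\<in>PiE ({1..N} - {u}) (\<lambda>_. {0..N+1}). C y)"
    by (rule sum_product[symmetric])
  also have "\<dots> = 0" using sum_pr_null_frac_increment[OF assms] by simp
  finally show ?thesis .
qed

definition exp_A :: "((nat \<Rightarrow> nat) \<Rightarrow> real) \<Rightarrow> real" where
  "exp_A f = (\<Sum>v\<in>label_vectors N. weight v * (if event_A v then f v else 0))"

abbreviation prob_A :: real where
  "prob_A \<equiv> exp_A (\<lambda>_. 1)"

definition prob_E1 :: real where
  "prob_E1 = (\<Sum>v\<in>label_vectors N. weight v * (if event_E1 v then 1 else 0))"

lemma exp_A_cong: "(\<And>v. event_A v \<Longrightarrow> f v = g v) \<Longrightarrow> exp_A f = exp_A g"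
  unfolding exp_A_def by (intro sum.cong) auto

lemma exp_A_mono: "(\<And>v. event_A v \<Longrightarrow> f v \<le> g v) \<Longrightarrow> exp_A f \<le> exp_A g"
  unfolding exp_A_def by (intro sum_mono mult_left_mono) (auto simp: weight_on_nonneg)

lemma exp_A_add: "exp_A (\<lambda>v. f v + g v) = exp_A f + exp_A g"
  unfolding exp_A_def sum.distrib[symmetric] by (intro sum.cong) (auto simp: distrib_left)

lemma exp_A_diff: "exp_A (\<lambda>v. f v - g v) = exp_A f - exp_A g"
  unfolding exp_A_def sum_subtractf[symmetric] by (intro sum.cong) (auto simp: right_diff_distrib)

lemma exp_A_cmult: "exp_A (\<lambda>v. r * f v) = r * exp_A f"
  unfolding exp_A_def sum_distrib_left by (intro sum.cong) auto

lemma optional_stopping: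
  "exp_A (\<lambda>v. real (cum_count H0 v (last_null_crossing v)) / real (last_null_crossing v)
              - real (cum_count H0 v N) / real N) = 0"
proof -
  have "(if event_A v then real (cum_count H0 v (last_null_crossing v)) / real (last_null_crossing v)
            - real (cum_count H0 v N) / real N else 0) =
      (\<Sum>i\<in>{2..N}. \<Sum>u\<in>H0. if stopped_before i v then null_frac_increment i (v u) else 0)" for v
  proof (cases "event_A v")
    case True
    have "1 \<le> last_null_crossing v" "last_null_crossing v \<le> N"
      using last_null_crossing_bounds[OF True] c_pos by auto
    then have "real (cum_count H0 v (last_null_crossing v)) / real (last_null_crossing v)
        - real (cum_count H0 v N) / real N =
        (\<Sum>i\<in>{2..N}. if last_null_crossing v < i then
           real (cum_count H0 v (i - 1)) / real (i - 1) - real (cum_count H0 v i) / real i else 0)"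
      by (rule sum_telescope_from[symmetric])
    also have "\<dots> = (\<Sum>i\<in>{2..N}. \<Sum>u\<in>H0.
        if stopped_before i v then null_frac_increment i (v u) else 0)"
      using True unfolding stopped_before_def
      by (intro sum.cong refl) (simp add: null_frac_diff_eq_sum[symmetric])
    finally show ?thesis using True by simp
  qed (simp add: stopped_before_def)
  then have "exp_A (\<lambda>v. real (cum_count H0 v (last_null_crossing v)) / real (last_null_crossing v)
              - real (cum_count H0 v N) / real N) =
      (\<Sum>v\<in>label_vectors N. \<Sum>i\<in>{2..N}. \<Sum>u\<in>H0.
        weight v * (if stopped_before i v then null_frac_increment i (v u) else 0))"
    unfolding exp_A_def by (simp add: sum_distrib_left)
  also have "\<dots> = (\<Sum>i\<in>{2..N}. \<Sum>u\<in>H0. \<Sum>v\<in>label_vectors N.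
        weight v * (if stopped_before i v then null_frac_increment i (v u) else 0))"
    by (subst sum.swap) (rule sum.cong[OF refl sum.swap])
  also have "\<dots> = 0" by (intro sum.neutral ballI sum_weight_stopped_increment) auto
  finally show ?thesis .
qed

lemma exp_A_nonneg: "(\<And>v. event_A v \<Longrightarrow> 0 \<le> f v) \<Longrightarrow> 0 \<le> exp_A f"
  unfolding exp_A_def by (intro sum_nonneg mult_nonneg_nonneg) (auto simp: weight_on_nonneg)

lemma prob_A_le_1: "prob_A \<le> 1"
proof -
  have "prob_A \<le> (\<Sum>v\<in>label_vectors N. weight v)"
    unfolding exp_A_def by (intro sum_mono) (auto simp: weight_on_nonneg)
  then show ?thesis using sum_weight_on[of "{1..N}"] by simp
qed

lemma prob_E1_nonneg: "0 \<le> prob_E1" and prob_E1_le_1: "prob_E1 \<le> 1"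
proof -
  show "0 \<le> prob_E1"
    unfolding prob_E1_def by (intro sum_nonneg) (auto simp: weight_on_nonneg)
  have "prob_E1 \<le> (\<Sum>v\<in>label_vectors N. weight v)"
    unfolding prob_E1_def by (intro sum_mono) (auto simp: weight_on_nonneg)
  then show "prob_E1 \<le> 1" using sum_weight_on[of "{1..N}"] by simp
qed

lemma prob_A_pos: "0 < prob_A"
proof -
  have "\<exists>l\<in>{0..N+1}. 0 < pr j l" if "j \<in> {1..N}" for j
  proof (rule ccontr)
    assume "\<not> ?thesis"
    then have "(\<Sum>l\<in>{0..N+1}. pr j l) = 0"
      using pr_nonneg by (intro sum.neutral) (meson not_less order.antisym)
    then show False using sum_pr[OF that] by simp
  qed
  then obtain l where l: "\<And>j. j \<in> {1..N} \<Longrightarrow> l j \<in> {0..N+1} \<and> 0 < pr j (l j)"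
    by metis
  define v where "v = restrict (\<lambda>j. if j \<in> H0 then N + 1 else l j) {1..N}"
  have v: "v \<in> label_vectors N"
    using l unfolding v_def by auto
  have "0 < weight v"
    unfolding weight_on_def v_def using l pr_null_top_pos by (intro prod_pos) auto
  moreover have "event_A v"
  proof -
    have "{j\<in>H0. v j = N + 1} = H0" using H0_Un_H1 unfolding v_def by auto
    then show ?thesis unfolding event_A_def label_count_def using c_le_card_H0 by simp
  qed
  moreover have "weight v * (if event_A v then 1 else 0) \<le> prob_A"
    unfolding exp_A_def using v finite_label_vectors
    by (intro member_le_sum) (auto simp: weight_on_nonneg)
  ultimately show ?thesis by simp
qed

lemma exp_A_null_frac_less: "exp_A (\<lambda>v. real (cum_count H0 v N) / real N) < prob_A"
proof -
  have "exp_A (\<lambda>v. real (cum_count H0 v N) / real N) \<le>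
      exp_A (\<lambda>_. (real (card H0) - real c) / real N * 1)"
  proof (rule exp_A_mono)
    fix v assume "event_A v"
    then have "real (cum_count H0 v N) \<le> real (card H0) - real c"
      using cum_count_add_label_count_le_card[OF finite_H0, of v N] unfolding event_A_def by simp
    then show "real (cum_count H0 v N) / real N \<le> (real (card H0) - real c) / real N * 1"
      by (simp add: divide_right_mono)
  qed
  also have "\<dots> = (real (card H0) - real c) / real N * prob_A"
    by (rule exp_A_cmult)
  also have "\<dots> < 1 * prob_A"
    using prob_A_pos c_pos card_H0_add_card_H1 N_pos
    by (intro mult_strict_right_mono) (auto simp: divide_less_eq)
  finally show ?thesis by simp
qed

lemma exp_A_shift_div_last_null_crossing:
  "exp_A (\<lambda>v. real shift / real (last_null_crossing v)) =
    prob_A - exp_A (\<lambda>v. real (cum_count H0 v N) / real N)"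
proof -
  have "exp_A (\<lambda>v. real (cum_count H0 v (last_null_crossing v)) / real (last_null_crossing v)
              - real (cum_count H0 v N) / real N) =
      exp_A (\<lambda>v. (1 - real shift / real (last_null_crossing v)) - real (cum_count H0 v N) / real N)"
  proof (rule exp_A_cong)
    fix v assume A: "event_A v"
    then have "0 < last_null_crossing v"
      and "real (cum_count H0 v (last_null_crossing v)) = real (last_null_crossing v) - real shift"
      using last_null_crossing_bounds[OF A] c_pos by simp_all
    then show "real (cum_count H0 v (last_null_crossing v)) / real (last_null_crossing v)
              - real (cum_count H0 v N) / real N =
        (1 - real shift / real (last_null_crossing v)) - real (cum_count H0 v N) / real N"
      by (simp add: diff_divide_distrib)
  qed
  then have "prob_A - exp_A (\<lambda>v. real shift / real (last_null_crossing v))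
      - exp_A (\<lambda>v. real (cum_count H0 v N) / real N) = 0"
    using optional_stopping by (simp only: exp_A_diff)
  then show ?thesis by linarith
qed

lemma Cauchy_Schwarz_last_null_crossing:
  "real shift * prob_A\<^sup>2 \<le>
    exp_A (\<lambda>v. real (last_null_crossing v)) *
      (prob_A - exp_A (\<lambda>v. real (cum_count H0 v N) / real N))"
proof -
  define w where "w v = weight v * (if event_A v then 1 else 0)" for v
  have pos: "0 < last_null_crossing v" if "event_A v" for v
    using last_null_crossing_bounds(1)[OF that] c_pos by simp
  have "prob_A\<^sup>2 \<le> (\<Sum>v\<in>label_vectors N. w v * real (last_null_crossing v)) *
      (\<Sum>v\<in>label_vectors N. w v / real (last_null_crossing v))"
    unfolding exp_A_def w_def[symmetric]
    by (rule Cauchy_Schwarz_weighted[OF finite_label_vectors])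
      (auto simp: w_def weight_on_nonneg pos split: if_splits)
  also have "(\<Sum>v\<in>label_vectors N. w v * real (last_null_crossing v)) =
      exp_A (\<lambda>v. real (last_null_crossing v))"
    unfolding exp_A_def w_def by (intro sum.cong) auto
  also have "(\<Sum>v\<in>label_vectors N. w v / real (last_null_crossing v)) =
      exp_A (\<lambda>v. real shift / real (last_null_crossing v)) / real shift"
    using c_le_shift c_pos unfolding exp_A_def w_def sum_divide_distrib by (intro sum.cong) auto
  finally show ?thesis
    using c_le_shift c_pos by (simp add: exp_A_shift_div_last_null_crossing field_simps)
qed

lemma exp_A_mult_E1:
  assumes "depends_only_on H0 f"
  shows "exp_A (\<lambda>v. f v * (if event_E1 v then 1 else 0)) = exp_A f * prob_E1"
proof -
  have "exp_A (\<lambda>v. f v * (if event_E1 v then 1 else 0)) =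
      (\<Sum>v\<in>label_vectors N.
        weight v * ((if event_A v then f v else 0) * (if event_E1 v then 1 else 0)))"
    unfolding exp_A_def by (intro sum.cong) auto
  also have "\<dots> = exp_A f * prob_E1"
    unfolding exp_A_def prob_E1_def
    by (intro sum_weight_mult depends_only_on_If depends_only_on_event_A depends_only_on_event_E1
        depends_only_on_const assms)
  finally show ?thesis .
qed

lemma exp_A_c_div_kplus_le:
  "exp_A (\<lambda>v. real c / real (kplus v)) \<le>
    prob_E1 *
      (exp_A (\<lambda>v. real c / (real c + real (card H1) + real (cum_count H0 v shift))) / prob_A)
    + 1 - prob_E1"
proof -
  define h where "h v = real c / (real c + real (card H1) + real (cum_count H0 v shift))" for v
  have dep_h: "depends_only_on H0 h"
    unfolding h_def by (rule depends_only_on_comp[OF depends_only_on_cum_count])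
  have "exp_A (\<lambda>v. real c / real (kplus v)) \<le>
      exp_A (\<lambda>v. h v * (if event_E1 v then 1 else 0) + 1 - 1 * (if event_E1 v then 1 else 0))"
  proof (rule exp_A_mono)
    fix v assume A: "event_A v"
    have "real c / real (kplus v) \<le> 1" using kplus_ge_c[OF A] c_pos by simp
    moreover have "real c / real (kplus v) \<le> h v" if "event_E1 v"
    proof -
      have "real c + real (card H1) + real (cum_count H0 v shift) \<le> real (kplus v)"
        using last_null_crossing_ge[OF A] kplus_eq_last_null_crossing[OF A that]
        unfolding shift_def by simp
      then show ?thesis unfolding h_def using c_pos by (intro divide_left_mono) auto
    qed
    ultimately show "real c / real (kplus v) \<le>
        h v * (if event_E1 v then 1 else 0) + 1 - 1 * (if event_E1 v then 1 else 0)"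
      by auto
  qed
  also have "\<dots> = exp_A h * prob_E1 + prob_A - prob_A * prob_E1"
    by (simp only: exp_A_add exp_A_diff exp_A_mult_E1 depends_only_on_const dep_h)
  also have "\<dots> \<le> prob_E1 * (exp_A h / prob_A) + 1 - prob_E1"
  proof -
    have "0 \<le> exp_A h" unfolding h_def by (rule exp_A_nonneg) simp
    then have "exp_A h \<le> exp_A h / prob_A"
      using prob_A_pos prob_A_le_1 by (simp add: le_divide_eq mult_left_le)
    then have "prob_E1 * exp_A h \<le> prob_E1 * (exp_A h / prob_A)"
      using prob_E1_nonneg by (rule mult_left_mono)
    moreover have "prob_A * (1 - prob_E1) \<le> 1 - prob_E1"
      using prob_A_le_1 prob_A_pos prob_E1_le_1 by (intro mult_left_le_one_le) auto
    ultimately show ?thesis by (simp add: algebra_simps)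
  qed
  finally show ?thesis unfolding h_def .
qed

lemma exp_A_kplus_ge:
  "real shift * prob_E1 / (1 - exp_A (\<lambda>v. real (cum_count H0 v N) / real N) / prob_A) \<le>
    exp_A (\<lambda>v. real (kplus v)) / prob_A"
proof -
  define T where "T = exp_A (\<lambda>v. real (cum_count H0 v N) / real N)"
  have "exp_A (\<lambda>v. real (last_null_crossing v)) * prob_E1 =
      exp_A (\<lambda>v. real (last_null_crossing v) * (if event_E1 v then 1 else 0))"
    using depends_only_on_comp[OF depends_only_on_last_null_crossing]
    by (rule exp_A_mult_E1[symmetric])
  also have "\<dots> = exp_A (\<lambda>v. real (kplus v) * (if event_E1 v then 1 else 0))"
    by (rule exp_A_cong) (simp add: kplus_eq_last_null_crossing)
  also have "\<dots> \<le> exp_A (\<lambda>v. real (kplus v))"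
    by (rule exp_A_mono) simp
  finally have kplus_ge:
    "exp_A (\<lambda>v. real (last_null_crossing v)) * prob_E1 \<le> exp_A (\<lambda>v. real (kplus v))" .
  have A: "0 < prob_A" and AT: "0 < prob_A - T"
    using prob_A_pos exp_A_null_frac_less unfolding T_def by simp_all
  have "real shift * prob_E1 / (1 - T / prob_A) = real shift * prob_E1 * prob_A / (prob_A - T)"
    using A by (simp add: field_simps)
  also have "\<dots> \<le> exp_A (\<lambda>v. real (last_null_crossing v)) * prob_E1 / prob_A"
  proof -
    have "real shift * prob_A\<^sup>2 * prob_E1 \<le>
        exp_A (\<lambda>v. real (last_null_crossing v)) * (prob_A - T) * prob_E1"
      using Cauchy_Schwarz_last_null_crossing prob_E1_nonneg unfolding T_def
      by (rule mult_right_mono)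
    then show ?thesis using A AT by (simp add: divide_le_eq le_divide_eq power2_eq_square mult_ac)
  qed
  also have "\<dots> \<le> exp_A (\<lambda>v. real (kplus v)) / prob_A"
    using kplus_ge A by (intro divide_right_mono) auto
  finally show ?thesis unfolding T_def .
qed

lemma event_A_iff_cum_count_le:
  assumes "v \<in> label_vectors N" "weight v \<noteq> 0"
  shows "event_A v \<longleftrightarrow> real (cum_count H0 v N) \<le> real (card H0) - real c"
proof -
  have "v j \<noteq> 0" if "j \<in> H0" for j
  proof
    assume "v j = 0"
    then have "weight v = 0"
      unfolding weight_on_def using that \<open>v j = 0\<close> pr_null_zero[OF that] H0_Un_H1
      by (intro prod_zero bexI[of _ j]) auto
    then show False using assms(2) by simp
  qed
  moreover have "v j \<le> Suc N" if "j \<in> H0" for j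
    using that assms(1) H0_Un_H1 by (auto simp: PiE_iff)
  ultimately have "cum_count H0 v N + label_count H0 v (Suc N) = card H0"
    by (intro cum_count_add_label_count_eq_card[OF finite_H0]) (auto simp: Suc_le_eq)
  then show ?thesis unfolding event_A_def by auto
qed

lemma sum_weight_cum_count_le:
  "(\<Sum>v\<in>label_vectors N.
      weight v * (if real (cum_count H0 v N) \<le> real (card H0) - real c then f v else 0)) =
    exp_A f"
  unfolding exp_A_def
proof (intro sum.cong refl)
  fix v assume "v \<in> label_vectors N"
  then show "weight v * (if real (cum_count H0 v N) \<le> real (card H0) - real c then f v else 0) =
      weight v * (if event_A v then f v else 0)"
    by (cases "weight v = 0") (simp_all add: event_A_iff_cum_count_le)
qed

end

section \<open>The p-value model\<close>

locale binned_pvalues = prob_space M for M :: "'a measure" +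
  fixes p :: "nat \<Rightarrow> 'a \<Rightarrow> real" and N :: nat and q :: real
  assumes N_ge_1: "1 \<le> N" and q_nonneg: "0 \<le> q"
    and indep_p: "indep_vars (\<lambda>_. borel) p {1..N}"
begin

definition labels :: "'a \<Rightarrow> nat \<Rightarrow> nat" where
  "labels \<omega> = restrict (\<lambda>j. bin_index N q (p j \<omega>)) {1..N}"

definition label_prob :: "nat \<Rightarrow> nat \<Rightarrow> real" where
  "label_prob j l = prob {\<omega> \<in> space M. bin_index N q (p j \<omega>) = l}"

lemma indep_bin_index: "indep_vars (\<lambda>_. count_space UNIV) (\<lambda>j \<omega>. bin_index N q (p j \<omega>)) {1..N}"
  by (rule indep_vars_compose2[OF indep_p measurable_bin_index[OF q_nonneg]])

lemma measurable_bin_index_p: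
  "j \<in> {1..N} \<Longrightarrow> (\<lambda>\<omega>. bin_index N q (p j \<omega>)) \<in> M \<rightarrow>\<^sub>M count_space UNIV"
  using indep_bin_index unfolding indep_vars_def by auto

lemma labels_in_label_vectors: "labels \<omega> \<in> label_vectors N"
  unfolding labels_def using bin_index_le[OF q_nonneg] by auto

lemma labels_eq_iff:
  assumes "v \<in> label_vectors N"
  shows "{\<omega> \<in> space M. labels \<omega> = v} = (\<Inter>j\<in>{1..N}. (\<lambda>\<omega>. bin_index N q (p j \<omega>)) -` {v j} \<inter> space M)"
  using N_ge_1 assms by (auto simp: labels_def PiE_def extensional_def fun_eq_iff)

lemma prob_labels_eq:
  assumes "v \<in> label_vectors N"
  shows "prob {\<omega> \<in> space M. labels \<omega> = v} = (\<Prod>j\<in>{1..N}. label_prob j (v j))"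
  using N_ge_1 indep_varsD_finite[OF indep_bin_index, of "\<lambda>j. {v j}"]
  unfolding labels_eq_iff[OF assms] label_prob_def by (simp add: vimage_def Int_def conj_commute)

lemma integral_labels:
  fixes F :: "(nat \<Rightarrow> nat) \<Rightarrow> real"
  shows "(\<integral>\<omega>. F (labels \<omega>) \<partial>M) = (\<Sum>v\<in>label_vectors N. F v * (\<Prod>j\<in>{1..N}. label_prob j (v j)))"
proof -
  let ?E = "\<lambda>v. {\<omega> \<in> space M. labels \<omega> = v}"
  have E: "?E v \<in> events" if "v \<in> label_vectors N" for v
    unfolding labels_eq_iff[OF that] using N_ge_1
    by (intro sets.finite_INT) (auto intro: measurable_sets[OF measurable_bin_index_p])
  have "F (labels \<omega>) = (\<Sum>v\<in>label_vectors N. F v * indicator (?E v) \<omega>)" if "\<omega> \<in> space M" for \<omega>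
  proof -
    have "(\<Sum>v\<in>label_vectors N. F v * indicator (?E v) \<omega>) = (\<Sum>v\<in>{labels \<omega>}. F v)"
      using labels_in_label_vectors[of \<omega>] that
      by (intro sum.mono_neutral_cong_right) (auto simp: indicator_def finite_PiE)
    then show ?thesis by simp
  qed
  then have "(\<integral>\<omega>. F (labels \<omega>) \<partial>M) = (\<integral>\<omega>. (\<Sum>v\<in>label_vectors N. F v * indicator (?E v) \<omega>) \<partial>M)"
    by (intro Bochner_Integration.integral_cong) simp_all
  also have "\<dots> = (\<Sum>v\<in>label_vectors N. F v * prob (?E v))"
    using E by (subst Bochner_Integration.integral_sum)
      (auto intro!: integrable_mult_right integrable_real_indicator simp: less_top[symmetric])
  finally show ?thesis by (simp add: prob_labels_eq)
qed

lemma sum_label_prob: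
  assumes "j \<in> {1..N}"
  shows "(\<Sum>l\<in>{0..N+1}. label_prob j l) = 1"
proof -
  let ?E = "\<lambda>l. {\<omega> \<in> space M. bin_index N q (p j \<omega>) = l}"
  have "?E l \<in> events" for l
    using measurable_sets[OF measurable_bin_index_p[OF assms], of "{l}"]
    by (simp add: vimage_def Int_def conj_commute)
  then have "(\<Sum>l\<in>{0..N+1}. label_prob j l) = prob (\<Union>l\<in>{0..N+1}. ?E l)"
    unfolding label_prob_def
    by (intro finite_measure_finite_Union[symmetric]) (auto simp: disjoint_family_on_def)
  also have "(\<Union>l\<in>{0..N+1}. ?E l) = space M"
    using bin_index_le[OF q_nonneg] by auto
  finally show ?thesis using prob_space by simp
qed

lemma label_prob_uniform:
  assumes "j \<in> {1..N}" "q \<le> 1" and uniform: "distr M borel (p j) = uniform_measure lborel {0..1}"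
  shows "\<And>l. l \<in> {1..N} \<Longrightarrow> label_prob j l = q / real N" and "label_prob j (N+1) = 1 - q"
proof -
  have p_meas: "p j \<in> borel_measurable M"
    using indep_p assms(1) unfolding indep_vars_def by auto
  have lebesgue: "label_prob j l = measure lborel ({0..1} \<inter> bin N q l)" if "l \<in> {1..N+1}" for l
  proof -
    have "{\<omega> \<in> space M. bin_index N q (p j \<omega>) = l} = p j -` bin N q l \<inter> space M"
      using bin_index_eq_iff[OF q_nonneg that] by auto
    then have "label_prob j l = measure (distr M borel (p j)) (bin N q l)"
      unfolding label_prob_def by (simp add: measure_distr[OF p_meas sets_bin])
    also have "\<dots> = measure lborel ({0..1} \<inter> bin N q l) / measure lborel {0..1::real}"
      unfolding uniform by (subst measure_uniform_measure) (auto simp: sets_bin)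
    finally show ?thesis by simp
  qed
  show "label_prob j l = q / real N" if l: "l \<in> {1..N}" for l
  proof -
    have "real l * q \<le> real N * q" using l q_nonneg by (intro mult_right_mono) auto
    then have "real l * q / real N \<le> q" using N_ge_1 by (simp add: divide_le_eq mult.commute)
    moreover have "0 \<le> (real l - 1) * q / real N" using l q_nonneg by simp
    ultimately have "{0..1} \<inter> bin N q l = {(real l - 1) * q / real N ..< real l * q / real N}"
      using l assms(2) by (auto simp: bin_def)
    moreover have "(real l - 1) * q / real N \<le> real l * q / real N"
      using q_nonneg by (intro divide_right_mono mult_right_mono) auto
    ultimately have "measure lborel ({0..1} \<inter> bin N q l) =
        real l * q / real N - (real l - 1) * q / real N"
      by simp
    also have "\<dots> = q / real N" using N_ge_1 by (simp add: field_simps)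
    finally show ?thesis using lebesgue l by simp
  qed
  have "{0..1} \<inter> bin N q (N+1) = {q..1}" unfolding bin_def using q_nonneg by auto
  then show "label_prob j (N+1) = 1 - q" using lebesgue[of "N+1"] assms(2) q_nonneg by simp
qed

end

locale bh_model = binned_pvalues +
  fixes H0 :: "nat set" and c :: nat
  assumes H0_subset: "H0 \<subseteq> {1..N}" and q_less_1: "q < 1"
    and c_ge_1: "1 \<le> c" and c_le_N0: "c \<le> card H0"
    and null_uniform: "\<And>j. j \<in> H0 \<Longrightarrow> distr M borel (p j) = uniform_measure lborel {0..1}"

sublocale bh_model \<subseteq> label_weights N c H0 "{1..N} - H0" label_prob
proof unfold_locales
  have uniform: "label_prob j l = q / real N" "label_prob j (N+1) = 1 - q"
    if "j \<in> H0" "l \<in> {1..N}" for j l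
    using label_prob_uniform[OF _ less_imp_le[OF q_less_1] null_uniform] that H0_subset by auto
  show "label_prob j l = label_prob j 1" if "j \<in> H0" "l \<in> {1..N}" for j l
    using uniform that N_ge_1 by simp
  show "0 < label_prob j (N+1)" if "j \<in> H0" for j
    using uniform[OF that, of 1] N_ge_1 q_less_1 by simp
  show "label_prob j 0 = 0" if "j \<in> H0" for j
  proof -
    have "(\<Sum>l\<in>{1..N}. label_prob j l) = (\<Sum>l\<in>{1..N}. q / real N)"
      using uniform(1)[OF that] by (intro sum.cong) auto
    also have "\<dots> = q" using N_ge_1 by simp
    finally have sum_bins: "(\<Sum>l\<in>{1..N}. label_prob j l) = q" .
    have "{0..N+1} = insert 0 (insert (N+1) {1..N})" by auto
    then have "(\<Sum>l\<in>{0..N+1}. label_prob j l) =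
        label_prob j 0 + (label_prob j (N+1) + (\<Sum>l\<in>{1..N}. label_prob j l))"
      by simp
    moreover have "(\<Sum>l\<in>{0..N+1}. label_prob j l) = 1"
      using that H0_subset by (intro sum_label_prob) auto
    ultimately show ?thesis using uniform[OF that, of 1] N_ge_1 sum_bins by simp
  qed
  show "H0 \<union> ({1..N} - H0) = {1..N}" "H0 \<inter> ({1..N} - H0) = {}"
    using H0_subset by auto
  show "1 \<le> c" "c \<le> card H0" by (fact c_ge_1 c_le_N0)+
  show "0 \<le> label_prob j l" for j l by (simp add: label_prob_def)
  show "(\<Sum>l\<in>{0..N+1}. label_prob j l) = 1" if "j \<in> {1..N}" for j
    using that by (rule sum_label_prob)
qed

context bh_model
begin

lemma integral_eq_sum_weight:
  assumes "\<And>\<omega>. \<omega> \<in> space M \<Longrightarrow> \<phi> \<omega> = F (labels \<omega>)"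
  shows "(\<integral>\<omega>. \<phi> \<omega> \<partial>M) = (\<Sum>v\<in>label_vectors N. weight v * F v)"
proof -
  have "(\<integral>\<omega>. \<phi> \<omega> \<partial>M) = (\<integral>\<omega>. F (labels \<omega>) \<partial>M)"
    using assms by (intro Bochner_Integration.integral_cong) auto
  then show ?thesis by (simp add: integral_labels weight_on_def mult.commute)
qed

lemma measure_eq_sum_weight:
  "measure M {\<omega> \<in> space M. P (labels \<omega>)} = (\<Sum>v\<in>label_vectors N. weight v * (if P v then 1 else 0))"
proof -
  have "measure M {\<omega> \<in> space M. P (labels \<omega>)} = (\<integral>\<omega>. indicator {\<omega> \<in> space M. P (labels \<omega>)} \<omega> \<partial>M)"
    by (simp add: Int_absorb2)
  also have "\<dots> = (\<Sum>v\<in>label_vectors N. weight v * (if P v then 1 else 0))"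
    by (rule integral_eq_sum_weight) (auto simp: indicator_def)
  finally show ?thesis .
qed

lemma load_eq_label_count_labels:
  assumes "S \<subseteq> {1..N}"
  shows "load N q S (\<lambda>i. p i \<omega>) (N+1) = label_count S (labels \<omega>) (N+1)"
proof -
  have "label_count S (\<lambda>j. bin_index N q (p j \<omega>)) (N+1) = label_count S (labels \<omega>) (N+1)"
    using assms by (intro label_count_cong) (auto simp: labels_def)
  then show ?thesis using load_eq_label_count[OF q_nonneg] by simp
qed

lemma loads_eq_cum_count_labels:
  assumes "S \<subseteq> {1..N}" "b \<le> N + 1"
  shows "loads N q S (\<lambda>i. p i \<omega>) 1 b = cum_count S (labels \<omega>) b"
proof -
  have "cum_count S (\<lambda>j. bin_index N q (p j \<omega>)) b = cum_count S (labels \<omega>) b"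
    using assms by (intro cum_count_cong) (auto simp: labels_def)
  then show ?thesis using loads_eq_cum_count[OF q_nonneg assms(2)] by simp
qed

lemma event_A_labels_iff: "event_A (labels \<omega>) \<longleftrightarrow> c \<le> load N q H0 (\<lambda>i. p i \<omega>) (N+1)"
  using load_eq_label_count_labels[OF H0_subset, of \<omega>] by (simp add: event_A_def)

lemma event_A_set_eq:
  "{\<omega> \<in> space M. c \<le> load N q H0 (\<lambda>i. p i \<omega>) (N+1)} = {\<omega> \<in> space M. event_A (labels \<omega>)}"
  using event_A_labels_iff by auto

lemma ktilde_plus_eq_kplus:
  assumes "event_A (labels \<omega>)"
  shows "ktilde_plus N q H0 c (\<lambda>i. p i \<omega>) = kplus (labels \<omega>)"
proof -
  have "cum_count {1..N} (\<lambda>j. bin_index N q (p j \<omega>)) i = cum_count {1..N} (labels \<omega>) i" for i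
    by (intro cum_count_cong) (simp add: labels_def)
  moreover have "c \<le> label_count H0 (\<lambda>j. bin_index N q (p j \<omega>)) (N+1)"
    using assms load_eq_label_count[OF q_nonneg, of "N+1" N H0] unfolding event_A_labels_iff by simp
  ultimately show ?thesis using ktilde_plus_eq_Max[OF q_nonneg] unfolding kplus_def by simp
qed

lemma integral_indicator_A:
  assumes "\<And>\<omega>. \<omega> \<in> space M \<Longrightarrow> event_A (labels \<omega>) \<Longrightarrow> \<phi> \<omega> = F (labels \<omega>)"
  shows "(\<integral>\<omega>. \<phi> \<omega> * indicator {\<omega> \<in> space M. c \<le> load N q H0 (\<lambda>i. p i \<omega>) (N+1)} \<omega> \<partial>M) = exp_A F"
  unfolding event_A_set_eq exp_A_def
  by (rule integral_eq_sum_weight) (auto simp: indicator_def assms)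

lemma measure_A: "measure M {\<omega> \<in> space M. c \<le> load N q H0 (\<lambda>i. p i \<omega>) (N+1)} = prob_A"
  unfolding event_A_set_eq exp_A_def by (rule measure_eq_sum_weight)

lemma A'_set_eq:
  "{\<omega> \<in> space M. real (loads N q H0 (\<lambda>i. p i \<omega>) 1 N) \<le> real (card H0) - real c} =
    {\<omega> \<in> space M. real (cum_count H0 (labels \<omega>) N) \<le> real (card H0) - real c}"
  using loads_eq_cum_count_labels[OF H0_subset, of N] by simp

lemma measure_A':
  "measure M {\<omega> \<in> space M. real (loads N q H0 (\<lambda>i. p i \<omega>) 1 N) \<le> real (card H0) - real c} = prob_A"
  unfolding A'_set_eq
    measure_eq_sum_weight[of "\<lambda>v. real (cum_count H0 v N) \<le> real (card H0) - real c"]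
  by (rule sum_weight_cum_count_le)

lemma integral_indicator_A':
  "(\<integral>\<omega>. real (loads N q H0 (\<lambda>i. p i \<omega>) 1 N) / real N *
      indicator {\<omega> \<in> space M. real (loads N q H0 (\<lambda>i. p i \<omega>) 1 N) \<le> real (card H0) - real c} \<omega> \<partial>M) =
    exp_A (\<lambda>v. real (cum_count H0 v N) / real N)"
proof -
  have "(\<integral>\<omega>. real (loads N q H0 (\<lambda>i. p i \<omega>) 1 N) / real N *
      indicator {\<omega> \<in> space M. real (loads N q H0 (\<lambda>i. p i \<omega>) 1 N) \<le> real (card H0) - real c} \<omega> \<partial>M) =
    (\<Sum>v\<in>label_vectors N. weight v * (if real (cum_count H0 v N) \<le> real (card H0) - real c
       then real (cum_count H0 v N) / real N else 0))"
    unfolding A'_set_eq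
    using loads_eq_cum_count_labels[OF H0_subset, of N]
    by (intro integral_eq_sum_weight) (simp add: indicator_def)
  then show ?thesis by (simp only: sum_weight_cum_count_le)
qed

lemma measure_E1:
  "measure M {\<omega> \<in> space M. loads N q ({1..N} - H0) (\<lambda>i. p i \<omega>) 1 c = card ({1..N} - H0)} = prob_E1"
proof -
  have "c \<le> N + 1" using c_le_N0 card_H0_add_card_H1 by simp
  then have "{\<omega> \<in> space M. loads N q ({1..N} - H0) (\<lambda>i. p i \<omega>) 1 c = card ({1..N} - H0)} =
      {\<omega> \<in> space M. event_E1 (labels \<omega>)}"
    unfolding event_E1_def using loads_eq_cum_count_labels[of "{1..N} - H0" c] by simp
  then show ?thesis unfolding prob_E1_def measure_eq_sum_weight[of event_E1, symmetric] by simp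
qed

lemma integral_c_div_ktilde_plus:
  "(\<integral>\<omega>. real c / real (ktilde_plus N q H0 c (\<lambda>i. p i \<omega>)) *
      indicator {\<omega> \<in> space M. c \<le> load N q H0 (\<lambda>i. p i \<omega>) (N+1)} \<omega> \<partial>M) =
    exp_A (\<lambda>v. real c / real (kplus v))"
  by (rule integral_indicator_A) (simp add: ktilde_plus_eq_kplus)

lemma integral_ktilde_plus:
  "(\<integral>\<omega>. real (ktilde_plus N q H0 c (\<lambda>i. p i \<omega>)) *
      indicator {\<omega> \<in> space M. c \<le> load N q H0 (\<lambda>i. p i \<omega>) (N+1)} \<omega> \<partial>M) =
    exp_A (\<lambda>v. real (kplus v))"
  by (rule integral_indicator_A) (simp add: ktilde_plus_eq_kplus)

lemma integral_c_div_shift: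
  "(\<integral>\<omega>. real c /
        (real c + real (card ({1..N} - H0)) +
         real (loads N q H0 (\<lambda>i. p i \<omega>) 1 (card ({1..N} - H0) + c))) *
      indicator {\<omega> \<in> space M. c \<le> load N q H0 (\<lambda>i. p i \<omega>) (N+1)} \<omega> \<partial>M) =
    exp_A (\<lambda>v. real c / (real c + real (card ({1..N} - H0)) + real (cum_count H0 v shift)))"
  using loads_eq_cum_count_labels[OF H0_subset, of shift] shift_le_N unfolding shift_def
  by (intro integral_indicator_A) simp

end

theorem theorem3:
  fixes M :: "'a measure" and p :: "nat \<Rightarrow> 'a \<Rightarrow> real"
    and N c :: nat and q :: real and H0 :: "nat set"
  defines "H1 \<equiv> {1..N} - H0"
  defines "N0 \<equiv> card H0"
  defines "N1 \<equiv> card H1"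
  defines "pv \<equiv> (\<lambda>x i. p i x)"
  defines "A \<equiv> {x \<in> space M. load N q H0 (pv x) (N + 1) \<ge> c}"
  defines "E1 \<equiv> {x \<in> space M. loads N q H1 (pv x) 1 c = N1}"
  defines "A' \<equiv> {x \<in> space M. real (loads N q H0 (pv x) 1 N) \<le> real N0 - real c}"
  assumes "prob_space M"
    and "N \<ge> 1" and "H0 \<subseteq> {1..N}"
    and "0 < q" and "q < 1"
    and "c \<ge> 1" and "c \<le> N0"
    and "prob_space.indep_vars M (\<lambda>_. borel) p {1..N}"
    and "\<And>i. i \<in> H0 \<Longrightarrow> distr M borel (p i) = uniform_measure lborel {0..1}"
    and "\<And>i. i \<in> H1 \<Longrightarrow> AE x in M. p i x \<in> {0..1}"
  shows "((\<integral>x. real c / real (ktilde_plus N q H0 c (pv x)) * indicator A x \<partial>M)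
           \<le> measure M E1 * cond_expect M (\<lambda>x. real c / (real c + real N1 + real (loads N q H0 (pv x) 1 (N1 + c)))) A
             + 1 - measure M E1)
         \<and> (cond_expect M (\<lambda>x. real (ktilde_plus N q H0 c (pv x))) A
           \<ge> (real N1 + real c) * measure M E1
             / (1 - cond_expect M (\<lambda>x. real (loads N q H0 (pv x) 1 N) / real N) A'))"
proof -
  interpret bh_model M p N q H0 c
    by (intro bh_model.intro binned_pvalues.intro binned_pvalues_axioms.intro bh_model_axioms.intro)
      (use assms(8-16) in \<open>simp_all add: N0_def\<close>)
  show ?thesis
    unfolding cond_expect_def A_def E1_def A'_def pv_def N0_def N1_def H1_def
      integral_c_div_ktilde_plus integral_ktilde_plus integral_c_div_shift integral_indicator_A'
      measure_A measure_A' measure_E1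
    using exp_A_c_div_kplus_le exp_A_kplus_ge unfolding shift_def by simp
qed

end
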